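(* Let $\rho_T$ be a T-state with $T=\mathrm{diag}(t_1,t_2,t_3)$ and $s_i=|t_i|$. If $s_1+s_2+s_3>\tfrac32$, then $\rho_T$ admits no local hidden state model for Bob and no local hidden state model for Alice; i.e., $\rho_T$ is EPR-steerable both by Alice and by Bob (using measurements of qubit observables $\boldsymbol u\cdot\boldsymbol\sigma$ by the steering party and projective measurements by the other).
   Context: $\boldsymbol\sigma=(\sigma_1,\sigma_2,\sigma_3)$ are the Pauli matrices. A T-state is $\rho_T=\frac14\big(\mathbb 1\otimes\mathbb 1+\sum_{j=1}^3 t_j\,\sigma_j\otimes\sigma_j\big)$ (assumed to be a valid density operator). A local hidden state (LHS) model for Bob means: there exist a probability distribution $P(\lambda)$, response probabilities $p(a|A,\lambda)$ for Alice's measurements, and qubit states $\rho_B(\lambda)$ such that $p(a,b|A,B)=\sum_\lambda P(\lambda)\,p(a|A,\lambda)\,\mathrm{tr}[\rho_B(\lambda)F^B_b]$ for all measurements $A$ of Alice and $B$ of Bob (with POVM $\{F^B_b\}$); an LHS model for Alice is defined symmetrically with the roles exchanged. A state is EPR-steerable by Alice (resp. Bob) if it has no LHS model for Bob (resp. Alice). *)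

theory Defs
  imports "HOL-Analysis.Analysis" "HOL-Probability.Probability"
begin

text \<open>Operators on a finite-dimensional Hilbert space with orthonormal basis indexed by 'n
  are represented as complex matrices of type complex^'n^'n.\<close>

definition qtrace :: "complex^'n^'n \<Rightarrow> complex" where
  "qtrace A = (\<Sum>i\<in>UNIV. A$i$i)"

definition density_op :: "complex^'n^'n \<Rightarrow> bool" where
  "density_op \<rho> \<longleftrightarrow>
     (\<forall>i j. \<rho>$i$j = cnj (\<rho>$j$i)) \<and>
     (\<forall>x::complex^'n. 0 \<le> Re (\<Sum>i\<in>UNIV. \<Sum>j\<in>UNIV. cnj (x$i) * \<rho>$i$j * x$j)) \<and>
     qtrace \<rho> = 1"

definition id2 :: "complex^2^2" where
  "id2 = (\<chi> i k. if i = k then 1 else 0)"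

text \<open>Pauli matrices sigma_1, sigma_2, sigma_3 (indexed by the elements 1,2,3 of type 3);
  basis vectors of the qubit are indexed by 1 and 2 of type 2.\<close>
definition pauli :: "3 \<Rightarrow> complex^2^2" where
  "pauli j =
     (if j = 1 then (\<chi> i k. if i \<noteq> k then 1 else 0)
      else if j = 2 then (\<chi> i k. if i = 1 \<and> k = 2 then - \<i> else if i = 2 \<and> k = 1 then \<i> else 0)
      else (\<chi> i k. if i = k then (if i = 1 then 1 else -1) else 0))"

definition kron :: "complex^2^2 \<Rightarrow> complex^2^2 \<Rightarrow> complex^(2\<times>2)^(2\<times>2)" where
  "kron A B = (\<chi> p q. A$(fst p)$(fst q) * B$(snd p)$(snd q))"

definition sigma_dot :: "real^3 \<Rightarrow> complex^2^2" where
  "sigma_dot u = (\<chi> i k. \<Sum>j\<in>UNIV. complex_of_real (u$j) * pauli j $ i $ k)"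

text \<open>Spectral projector of the observable u\<cdot>sigma (|u| = 1) for outcome a \<in> {-1,1}:
  (1 + a u\<cdot>sigma)/2.\<close>
definition proj :: "real^3 \<Rightarrow> int \<Rightarrow> complex^2^2" where
  "proj u a = (\<chi> i k. (id2$i$k + of_int a * sigma_dot u $i$k) / 2)"

definition T_state :: "real^3 \<Rightarrow> complex^(2\<times>2)^(2\<times>2)" where
  "T_state t = (\<chi> p q. (kron id2 id2 $p$q
        + (\<Sum>j\<in>UNIV. complex_of_real (t$j) * kron (pauli j) (pauli j) $p$q)) / 4)"

text \<open>Joint outcome probability p(a,b|u,v) = tr[rho (P^u_a \<otimes> P^v_b)] when Alice measures
  u\<cdot>sigma and Bob measures v\<cdot>sigma.\<close>
definition joint_prob :: "complex^(2\<times>2)^(2\<times>2) \<Rightarrow> real^3 \<Rightarrow> real^3 \<Rightarrow> int \<Rightarrow> int \<Rightarrow> real" where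
  "joint_prob \<rho> u v a b = Re (qtrace (\<rho> ** kron (proj u a) (proj v b)))"

definition outcomes :: "int set" where "outcomes = {-1, 1}"

text \<open>Local hidden state model for Bob (with hidden variables of type 'l, distributed
  according to a discrete probability distribution P): Alice's qubit-observable measurements
  u\<cdot>sigma (unit u) have response probabilities, Bob holds hidden states, and all joint
  statistics for Alice's u\<cdot>sigma and Bob's projective measurements v\<cdot>sigma are reproduced.\<close>
definition LHS_Bob :: "'l itself \<Rightarrow> complex^(2\<times>2)^(2\<times>2) \<Rightarrow> bool" where
  "LHS_Bob _ \<rho> \<longleftrightarrow>
    (\<exists>(P :: 'l pmf) (resp :: 'l \<Rightarrow> real^3 \<Rightarrow> int \<Rightarrow> real) (\<sigma> :: 'l \<Rightarrow> complex^2^2).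
       (\<forall>l u. norm u = 1 \<longrightarrow> (\<forall>a\<in>outcomes. 0 \<le> resp l u a) \<and> (\<Sum>a\<in>outcomes. resp l u a) = 1) \<and>
       (\<forall>l. density_op (\<sigma> l)) \<and>
       (\<forall>u v a b. norm u = 1 \<longrightarrow> norm v = 1 \<longrightarrow> a \<in> outcomes \<longrightarrow> b \<in> outcomes \<longrightarrow>
          joint_prob \<rho> u v a b =
            measure_pmf.expectation P (\<lambda>l. resp l u a * Re (qtrace (\<sigma> l ** proj v b)))))"

definition LHS_Alice :: "'l itself \<Rightarrow> complex^(2\<times>2)^(2\<times>2) \<Rightarrow> bool" where
  "LHS_Alice _ \<rho> \<longleftrightarrow>
    (\<exists>(P :: 'l pmf) (resp :: 'l \<Rightarrow> real^3 \<Rightarrow> int \<Rightarrow> real) (\<sigma> :: 'l \<Rightarrow> complex^2^2).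
       (\<forall>l v. norm v = 1 \<longrightarrow> (\<forall>b\<in>outcomes. 0 \<le> resp l v b) \<and> (\<Sum>b\<in>outcomes. resp l v b) = 1) \<and>
       (\<forall>l. density_op (\<sigma> l)) \<and>
       (\<forall>u v a b. norm u = 1 \<longrightarrow> norm v = 1 \<longrightarrow> a \<in> outcomes \<longrightarrow> b \<in> outcomes \<longrightarrow>
          joint_prob \<rho> u v a b =
            measure_pmf.expectation P (\<lambda>l. Re (qtrace (\<sigma> l ** proj u a)) * resp l v b)))"

end

(*
  An LHS model for Bob reproduces the correlations  \<Sum>j. t j u j v j = E[A(\<lambda>,u) (r(\<lambda>) \<bullet> v)]
  with |A| \<le> 1 and Bloch vectors |r(\<lambda>)| \<le> 1; as T-states are symmetric, an LHS model for
  Alice is also one for Bob.  Taking for v the unit vector u with its signs flipped where t j < 0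
  gives  \<Sum>j. |t j| u j\<^sup>2 \<le> E|r'(\<lambda>) \<bullet> u|  for every unit vector u, where r' is r with the same
  signs flipped.  Averaging over the unit sphere (u = y / |y| for a standard Gaussian y, weighted
  by |y|) turns the left side into (\<Sum>j. |t j|) / 3 and the right side into at most 1/2.
*)
theory Submission
  imports Defs "HOL-Real_Asymp.Real_Asymp"
begin

section \<open>Traces of Pauli operators\<close>

lemma sum_UNIV_prod:
  "(\<Sum>p\<in>(UNIV::('a::finite \<times> 'b::finite) set). f p) = (\<Sum>i\<in>UNIV. \<Sum>k\<in>UNIV. f (i, k))"
  unfolding sum.cartesian_product UNIV_Times_UNIV case_prod_eta ..

lemma qtrace_mult: "qtrace (X ** K) = (\<Sum>p\<in>UNIV. \<Sum>q\<in>UNIV. X$p$q * K$q$p)"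
  unfolding qtrace_def matrix_matrix_mult_def by simp

lemma qtrace_kron_mult: "qtrace (kron A B ** kron C D) = qtrace (A ** C) * qtrace (B ** D)"
  unfolding qtrace_mult kron_def by (simp add: sum_UNIV_prod sum_2 algebra_simps)

lemma pauli_entries [simp]:
  "pauli 1 $ 1 $ 1 = 0" "pauli 1 $ 1 $ 2 = 1" "pauli 1 $ 2 $ 1 = 1" "pauli 1 $ 2 $ 2 = 0"
  "pauli 2 $ 1 $ 1 = 0" "pauli 2 $ 1 $ 2 = -\<i>" "pauli 2 $ 2 $ 1 = \<i>" "pauli 2 $ 2 $ 2 = 0"
  "pauli 3 $ 1 $ 1 = 1" "pauli 3 $ 1 $ 2 = 0" "pauli 3 $ 2 $ 1 = 0" "pauli 3 $ 2 $ 2 = -1"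
  by (simp_all add: pauli_def)

lemma id2_entries [simp]: "id2 $ 1 $ 1 = 1" "id2 $ 1 $ 2 = 0" "id2 $ 2 $ 1 = 0" "id2 $ 2 $ 2 = 1"
  by (simp_all add: id2_def)

lemma qtrace_id2_mult: "qtrace (id2 ** X) = qtrace X"
  unfolding qtrace_def matrix_matrix_mult_def by (simp add: sum_2)

lemma qtrace_pauli: "qtrace (pauli j) = 0"
  unfolding qtrace_def using exhaust_3[of j] by (auto simp: sum_2)

lemma qtrace_pauli_mult_pauli: "qtrace (pauli j ** pauli k) = (if j = k then 2 else 0)"
  unfolding qtrace_mult using exhaust_3[of j] exhaust_3[of k] by (auto simp: sum_2)

lemma qtrace_mult_proj:
  "qtrace (X ** proj u a) = (qtrace X + of_int a * (\<Sum>j\<in>UNIV. of_real (u$j) * qtrace (X ** pauli j))) / 2"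
  unfolding qtrace_def matrix_matrix_mult_def proj_def sigma_dot_def
  by (simp add: sum_2 sum_3 algebra_simps add_divide_distrib)

lemma qtrace_proj: "qtrace (proj u a) = 1"
proof -
  have "qtrace (proj u a) = qtrace (id2 ** proj u a)" by (simp add: qtrace_id2_mult)
  also have "\<dots> = 1" unfolding qtrace_mult_proj
    by (simp add: qtrace_id2_mult qtrace_pauli) (simp add: qtrace_def sum_2)
  finally show ?thesis .
qed

lemma qtrace_pauli_mult_proj: "qtrace (pauli j ** proj u a) = of_int a * of_real (u$j)"
  unfolding qtrace_mult_proj qtrace_pauli_mult_pauli qtrace_pauli
  by (simp add: if_distrib[where f="\<lambda>x. _ * x"] cong: if_cong)

lemma qtrace_T_state_mult:
  "qtrace (T_state t ** K) =
     (qtrace (kron id2 id2 ** K) + (\<Sum>j\<in>UNIV. of_real (t$j) * qtrace (kron (pauli j) (pauli j) ** K))) / 4"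
proof -
  have "qtrace (T_state t ** K) =
      ((\<Sum>p\<in>UNIV. \<Sum>q\<in>UNIV. kron id2 id2 $p$q * K$q$p)
       + (\<Sum>p\<in>UNIV. \<Sum>q\<in>UNIV. \<Sum>j\<in>UNIV. of_real (t$j) * (kron (pauli j) (pauli j) $p$q * K$q$p))) / 4"
    unfolding qtrace_mult T_state_def
    by (simp add: sum_divide_distrib[symmetric] sum.distrib sum_distrib_right ring_distribs mult.assoc)
  also have "(\<Sum>p\<in>UNIV. \<Sum>q\<in>UNIV. \<Sum>j\<in>UNIV. of_real (t$j) * (kron (pauli j) (pauli j) $p$q * K$q$p))
      = (\<Sum>j\<in>UNIV. of_real (t$j) * qtrace (kron (pauli j) (pauli j) ** K))"
  proof -
    have "(\<Sum>p\<in>UNIV. \<Sum>q\<in>UNIV. \<Sum>j\<in>UNIV. of_real (t$j) * (kron (pauli j) (pauli j) $p$q * K$q$p))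
        = (\<Sum>p\<in>UNIV. \<Sum>j\<in>UNIV. \<Sum>q\<in>UNIV. of_real (t$j) * (kron (pauli j) (pauli j) $p$q * K$q$p))"
      by (intro sum.cong refl sum.swap)
    also have "\<dots> = (\<Sum>j\<in>UNIV. \<Sum>p\<in>UNIV. \<Sum>q\<in>UNIV. of_real (t$j) * (kron (pauli j) (pauli j) $p$q * K$q$p))"
      by (rule sum.swap)
    finally show ?thesis unfolding qtrace_mult by (simp add: sum_distrib_left)
  qed
  finally show ?thesis by (simp add: qtrace_mult)
qed

lemma joint_prob_T_state:
  "joint_prob (T_state t) u v a b = (1 + of_int (a * b) * (\<Sum>j\<in>UNIV. t$j * u$j * v$j)) / 4"
proof -
  have "qtrace (T_state t ** kron (proj u a) (proj v b)) =
      (1 + (\<Sum>j\<in>UNIV. of_real (t$j) * ((of_int a * of_real (u$j)) * (of_int b * of_real (v$j))))) / 4"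
    unfolding qtrace_T_state_mult qtrace_kron_mult qtrace_id2_mult qtrace_proj qtrace_pauli_mult_proj
    by simp
  also have "\<dots> = of_real ((1 + of_int (a * b) * (\<Sum>j\<in>UNIV. t$j * u$j * v$j)) / 4)"
    by (simp add: sum_distrib_left algebra_simps)
  finally show ?thesis unfolding joint_prob_def by (metis Re_complex_of_real)
qed

lemma joint_prob_T_state_swap: "joint_prob (T_state t) u v a b = joint_prob (T_state t) v u b a"
  unfolding joint_prob_T_state by (simp add: mult_ac)

definition bloch :: "complex^2^2 \<Rightarrow> real^3" where
  "bloch \<sigma> = (\<chi> j. Re (qtrace (\<sigma> ** pauli j)))"

lemma Re_qtrace_mult_proj:
  assumes "density_op \<sigma>"
  shows "Re (qtrace (\<sigma> ** proj v b)) = (1 + of_int b * (bloch \<sigma> \<bullet> v)) / 2"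
proof -
  have "qtrace \<sigma> = 1" using assms unfolding density_op_def by simp
  then have "Re (qtrace (\<sigma> ** proj v b)) = (1 + of_int b * (\<Sum>j\<in>UNIV. v$j * Re (qtrace (\<sigma> ** pauli j)))) / 2"
    unfolding qtrace_mult_proj by simp
  then show ?thesis by (simp add: bloch_def inner_vec_def mult.commute)
qed

text \<open>Writing \<open>\<sigma> = [[p, z], [cnj z, q]]\<close>, positivity gives \<open>|z|\<^sup>2 \<le> p q\<close>, and the Bloch
  vector is \<open>(2 Re z, -2 Im z, p - q)\<close> with \<open>p + q = 1\<close>, so its squared norm is at most
  \<open>(p + q)\<^sup>2\<close>.\<close>
lemma norm_bloch_le_1:
  assumes "density_op \<sigma>"
  shows "norm (bloch \<sigma>) \<le> 1"
proof -
  have herm: "\<And>i j. \<sigma>$i$j = cnj (\<sigma>$j$i)"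
    and psd: "\<And>x::complex^2. 0 \<le> Re (\<Sum>i\<in>UNIV. \<Sum>j\<in>UNIV. cnj (x$i) * \<sigma>$i$j * x$j)"
    and tr: "qtrace \<sigma> = 1"
    using assms unfolding density_op_def by blast+
  define p where "p = Re (\<sigma>$1$1)"
  define q where "q = Re (\<sigma>$2$2)"
  define z where "z = \<sigma>$1$2"
  have entries: "\<sigma>$1$1 = of_real p" "\<sigma>$2$2 = of_real q" "\<sigma>$2$1 = cnj z"
    using herm[of 1 1] herm[of 2 2] herm[of 2 1]
    by (simp_all add: p_def q_def z_def complex_eq_iff)
  have pq: "p + q = 1" using tr unfolding qtrace_def by (simp add: sum_2 entries complex_eq_iff)
  have form: "Re (\<Sum>i\<in>UNIV. \<Sum>j\<in>UNIV. cnj (x$i) * \<sigma>$i$j * x$j) =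
      Re (cnj (x$1) * of_real p * x$1 + cnj (x$1) * z * x$2 + cnj (x$2) * cnj z * x$1
          + cnj (x$2) * of_real q * x$2)" for x :: "complex^2"
    by (simp add: sum_2 entries z_def)
  have "0 \<le> p * (p * q - (Re z)\<^sup>2 - (Im z)\<^sup>2)"
    using psd[of "\<chi> i. if i = 1 then - z else of_real p"] unfolding form
    by (simp add: algebra_simps power2_eq_square)
  moreover have "0 \<le> q * (p * q - (Re z)\<^sup>2 - (Im z)\<^sup>2)"
    using psd[of "\<chi> i. if i = 1 then of_real q else - cnj z"] unfolding form
    by (simp add: algebra_simps power2_eq_square)
  ultimately have z_le: "(Re z)\<^sup>2 + (Im z)\<^sup>2 \<le> p * q"
    using pq by (smt (verit) distrib_right mult_cancel_right2)
  have "bloch \<sigma> $ 1 = 2 * Re z" "bloch \<sigma> $ 2 = -2 * Im z" "bloch \<sigma> $ 3 = p - q"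
    unfolding bloch_def qtrace_mult by (simp_all add: sum_2 entries z_def[symmetric])
  then have "(norm (bloch \<sigma>))\<^sup>2 = (2 * Re z)\<^sup>2 + (2 * Im z)\<^sup>2 + (p - q)\<^sup>2"
    unfolding power2_norm_eq_inner inner_vec_def sum_3 by (simp add: power2_eq_square)
  also have "\<dots> \<le> (p + q)\<^sup>2" using z_le by (simp add: power2_eq_square algebra_simps)
  finally show ?thesis using pq by (simp add: power_le_one_iff abs_le_square_iff)
qed

section \<open>Local hidden state models of T-states\<close>

lemma LHS_Alice_T_state_imp_LHS_Bob:
  assumes "LHS_Alice TYPE('l) (T_state t)"
  shows "LHS_Bob TYPE('l) (T_state t)"
proof -
  obtain P :: "'l pmf" and resp :: "'l \<Rightarrow> real^3 \<Rightarrow> int \<Rightarrow> real" and \<sigma> where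
    resp: "\<forall>l v. norm v = 1 \<longrightarrow> (\<forall>b\<in>outcomes. 0 \<le> resp l v b) \<and> (\<Sum>b\<in>outcomes. resp l v b) = 1"
    and dens: "\<forall>l. density_op (\<sigma> l)"
    and joint: "\<forall>u v a b. norm u = 1 \<longrightarrow> norm v = 1 \<longrightarrow> a \<in> outcomes \<longrightarrow> b \<in> outcomes \<longrightarrow>
      joint_prob (T_state t) u v a b = measure_pmf.expectation P (\<lambda>l. Re (qtrace (\<sigma> l ** proj u a)) * resp l v b)"
    using assms unfolding LHS_Alice_def by blast
  have "joint_prob (T_state t) u v a b = measure_pmf.expectation P (\<lambda>l. resp l u a * Re (qtrace (\<sigma> l ** proj v b)))"
    if "norm u = 1" "norm v = 1" "a \<in> outcomes" "b \<in> outcomes" for u v a b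
    using joint that joint_prob_T_state_swap[of t u v a b] by (simp add: mult.commute)
  then show ?thesis using resp dens unfolding LHS_Bob_def by blast
qed

text \<open>\<open>A l u\<close> is the mean of Alice's \<open>\<plusminus>1\<close> outcome for the observable \<open>u \<cdot> \<sigma>\<close> and
  \<open>r l\<close> is the Bloch vector of Bob's hidden state.\<close>
definition LHS_correlation_model ::
    "'l pmf \<Rightarrow> ('l \<Rightarrow> real^3 \<Rightarrow> real) \<Rightarrow> ('l \<Rightarrow> real^3) \<Rightarrow> real^3 \<Rightarrow> bool" where
  "LHS_correlation_model P A r t \<longleftrightarrow>
     (\<forall>l u. norm u = 1 \<longrightarrow> \<bar>A l u\<bar> \<le> 1) \<and> (\<forall>l. norm (r l) \<le> 1) \<and>
     (\<forall>u v. norm u = 1 \<longrightarrow> norm v = 1 \<longrightarrow>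
        (\<Sum>j\<in>UNIV. t$j * u$j * v$j) = measure_pmf.expectation P (\<lambda>l. A l u * (r l \<bullet> v)))"

lemma integrable_measure_pmf_bounded:
  fixes f :: "'a \<Rightarrow> real"
  assumes "\<And>x. \<bar>f x\<bar> \<le> B"
  shows "integrable (measure_pmf P) f"
  using assms by (intro measure_pmf.integrable_const_bound[where B=B]) auto

lemma correlation_from_joint_probs:
  fixes F :: "int \<Rightarrow> int \<Rightarrow> 'l \<Rightarrow> real"
  assumes joint: "\<And>a b. a \<in> outcomes \<Longrightarrow> b \<in> outcomes \<Longrightarrow>
      (1 + of_int (a * b) * c) / 4 = measure_pmf.expectation P (F a b)"
    and bounded: "\<And>a b l. a \<in> outcomes \<Longrightarrow> b \<in> outcomes \<Longrightarrow> \<bar>F a b l\<bar> \<le> B"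
  shows "c = measure_pmf.expectation P (\<lambda>l. F 1 1 l - F 1 (-1) l - F (-1) 1 l + F (-1) (-1) l)"
proof -
  have outcomes: "1 \<in> outcomes" "-1 \<in> outcomes" by (auto simp: outcomes_def)
  have "integrable (measure_pmf P) (F a b)" if "a \<in> outcomes" "b \<in> outcomes" for a b
    using bounded[OF that] by (rule integrable_measure_pmf_bounded)
  then show ?thesis
    using joint[of 1 1] joint[of 1 "-1"] joint[of "-1" 1] joint[of "-1" "-1"] outcomes
    by (simp add: field_simps)
qed

lemma LHS_Bob_T_state_imp_correlation_model:
  assumes "LHS_Bob TYPE('l) (T_state t)"
  shows "\<exists>(P :: 'l pmf) A r. LHS_correlation_model P A r t"
proof -
  obtain P :: "'l pmf" and resp :: "'l \<Rightarrow> real^3 \<Rightarrow> int \<Rightarrow> real" and \<sigma> where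
    resp: "\<forall>l u. norm u = 1 \<longrightarrow> (\<forall>a\<in>outcomes. 0 \<le> resp l u a) \<and> (\<Sum>a\<in>outcomes. resp l u a) = 1"
    and dens: "\<forall>l. density_op (\<sigma> l)"
    and joint: "\<forall>u v a b. norm u = 1 \<longrightarrow> norm v = 1 \<longrightarrow> a \<in> outcomes \<longrightarrow> b \<in> outcomes \<longrightarrow>
      joint_prob (T_state t) u v a b = measure_pmf.expectation P (\<lambda>l. resp l u a * Re (qtrace (\<sigma> l ** proj v b)))"
    using assms unfolding LHS_Bob_def by blast
  define A where "A l u = resp l u 1 - resp l u (-1)" for l u
  define r where "r l = bloch (\<sigma> l)" for l
  have r: "norm (r l) \<le> 1" for l using dens norm_bloch_le_1 r_def by auto
  have resp_le: "\<bar>resp l u a\<bar> \<le> 1" if "norm u = 1" "a \<in> outcomes" for l u a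
    using spec[OF spec[OF resp, of l], of u] that by (auto simp: outcomes_def)
  have "(\<Sum>j\<in>UNIV. t$j * u$j * v$j) = measure_pmf.expectation P (\<lambda>l. A l u * (r l \<bullet> v))"
    if u: "norm u = 1" and v: "norm v = 1" for u v
  proof -
    define F where "F a b l = resp l u a * ((1 + of_int b * (r l \<bullet> v)) / 2)" for a b l
    have "(\<Sum>j\<in>UNIV. t$j * u$j * v$j) =
        measure_pmf.expectation P (\<lambda>l. F 1 1 l - F 1 (-1) l - F (-1) 1 l + F (-1) (-1) l)"
    proof (rule correlation_from_joint_probs)
      fix a b assume ab: "a \<in> outcomes" "b \<in> outcomes"
      show "(1 + of_int (a * b) * (\<Sum>j\<in>UNIV. t$j * u$j * v$j)) / 4 = measure_pmf.expectation P (F a b)"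
        using joint u v ab dens unfolding joint_prob_T_state F_def r_def by (simp add: Re_qtrace_mult_proj)
      fix l
      have "\<bar>r l \<bullet> v\<bar> \<le> 1" using Cauchy_Schwarz_ineq2[of "r l" v] r[of l] v by simp
      then have "\<bar>(1 + of_int b * (r l \<bullet> v)) / 2\<bar> \<le> 1" using ab(2) by (auto simp: outcomes_def)
      then show "\<bar>F a b l\<bar> \<le> 1"
        unfolding F_def abs_mult using resp_le[OF u ab(1), of l] by (intro mult_le_one) auto
    qed
    also have "\<dots> = measure_pmf.expectation P (\<lambda>l. A l u * (r l \<bullet> v))"
      by (rule Bochner_Integration.integral_cong) (auto simp: F_def A_def field_simps)
    finally show ?thesis .
  qed
  moreover have "\<bar>A l u\<bar> \<le> 1" if "norm u = 1" for l u
    using spec[OF spec[OF resp, of l], of u] that by (auto simp: A_def outcomes_def)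
  ultimately show ?thesis using r unfolding LHS_correlation_model_def by blast
qed

section \<open>Gaussian integrals\<close>

lemma nn_integral_lborel_prod_vec:
  fixes f :: "'n::finite \<Rightarrow> real \<Rightarrow> real"
  assumes meas: "\<And>i. f i \<in> borel_measurable borel" and nonneg: "\<And>i x. 0 \<le> f i x"
  shows "(\<integral>\<^sup>+y. ennreal (\<Prod>i\<in>UNIV. f i (y$i)) \<partial>(lborel::(real^'n) measure)) =
    (\<Prod>i\<in>UNIV. \<integral>\<^sup>+x. ennreal (f i x) \<partial>lborel)"
proof -
  define idx :: "real^'n \<Rightarrow> 'n" where "idx b = (SOME i. b = axis i 1)" for b
  have idx: "idx (axis i 1) = i" for i unfolding idx_def by (rule some_equality) (auto simp: axis_eq_axis)
  define g where "g b x = ennreal (f (idx b) x)" for b x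
  have Basis: "(Basis :: (real^'n) set) = (\<lambda>i. axis i 1) ` UNIV" unfolding Basis_vec_def by auto
  have inj: "inj_on (\<lambda>i::'n. axis i (1::real)) UNIV" by (auto simp: inj_def axis_eq_axis)
  have "(\<integral>\<^sup>+y. (\<Prod>b\<in>Basis. g b (y \<bullet> b)) \<partial>(lborel::(real^'n) measure)) = (\<Prod>b\<in>Basis. \<integral>\<^sup>+x. g b x \<partial>lborel)"
    using meas by (intro nn_integral_lborel_prod) (simp_all add: g_def)
  moreover have "(\<Prod>b\<in>Basis. g b (y \<bullet> b)) = ennreal (\<Prod>i\<in>UNIV. f i (y$i))" for y :: "real^'n"
    unfolding Basis prod.reindex[OF inj] by (simp add: g_def idx inner_axis prod_ennreal nonneg)
  moreover have "g (axis i 1) = (\<lambda>x. ennreal (f i x))" for i by (simp add: g_def idx fun_eq_iff)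
  then have "(\<Prod>b\<in>Basis. \<integral>\<^sup>+x. g b x \<partial>lborel) = (\<Prod>i\<in>UNIV. \<integral>\<^sup>+x. ennreal (f i x) \<partial>lborel)"
    unfolding Basis prod.reindex[OF inj] by simp
  ultimately show ?thesis by simp
qed

lemma distr_lborel_orthogonal_transformation:
  fixes f :: "real^'n::{finite,wellorder} \<Rightarrow> real^'n::_"
  assumes f: "orthogonal_transformation f"
  shows "distr lborel borel f = lborel"
proof (rule lborel_eqI[symmetric])
  have f_meas: "f \<in> borel_measurable borel"
    using orthogonal_transformation_linear[OF f]
    by (intro borel_measurable_continuous_onI linear_continuous_on) (simp add: linear_conv_bounded_linear)
  fix l u :: "(real, 'n) vec" assume le: "\<And>b. b \<in> Basis \<Longrightarrow> l \<bullet> b \<le> u \<bullet> b"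
  have g: "orthogonal_transformation (inv f)" using orthogonal_transformation_inv f by blast
  have preimage: "f -` box l u = inv f ` box l u"
    using orthogonal_transformation_bij[OF f] bij_vimage_eq_inv_image by blast
  have "f -` box l u \<in> sets borel" using f_meas by (simp add: measurable_sets_borel)
  then have "emeasure (distr lborel borel f) (box l u) = emeasure lebesgue (inv f ` box l u)"
    using f_meas preimage by (simp add: emeasure_distr)
  also have "\<dots> = ennreal (measure lebesgue (inv f ` box l u))"
    using measurable_orthogonal_image[OF g lmeasurable_box] by (rule emeasure_eq_measure2)
  also have "\<dots> = ennreal (measure lebesgue (box l u))"
    using measure_orthogonal_image[OF g] by simp
  also have "\<dots> = ennreal (\<Prod>b\<in>Basis. (u - l) \<bullet> b)" using le by (simp add: measure_lborel_box_eq)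
  finally show "emeasure (distr lborel borel f) (box l u) = (\<Prod>b\<in>Basis. (u - l) \<bullet> b)" .
qed simp

lemma nn_integral_lborel_orthogonal_transformation:
  fixes f :: "real^'n::{finite,wellorder} \<Rightarrow> real^'n::_"
  assumes f: "orthogonal_transformation f" and h: "h \<in> borel_measurable borel"
  shows "(\<integral>\<^sup>+y. h y \<partial>lborel) = (\<integral>\<^sup>+y. h (f y) \<partial>lborel)"
proof -
  have "f \<in> borel_measurable borel"
    using orthogonal_transformation_linear[OF f]
    by (intro borel_measurable_continuous_onI linear_continuous_on) (simp add: linear_conv_bounded_linear)
  then have "(\<integral>\<^sup>+y. h y \<partial>distr lborel borel f) = (\<integral>\<^sup>+y. h (f y) \<partial>lborel)"
    using h by (simp add: nn_integral_distr)
  then show ?thesis by (simp add: distr_lborel_orthogonal_transformation[OF f])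
qed

lemma borel_measurable_vec_nth [measurable]: "(\<lambda>y::real^'n. y$j) \<in> borel_measurable borel"
  by (intro borel_measurable_continuous_onI continuous_intros)

definition std_normal_density_vec :: "real^'n \<Rightarrow> real" where
  "std_normal_density_vec y = (\<Prod>i\<in>UNIV. std_normal_density (y$i))"

lemma std_normal_density_vec_nonneg: "0 \<le> std_normal_density_vec y"
  unfolding std_normal_density_vec_def by (simp add: prod_nonneg)

lemma borel_measurable_std_normal_density_vec [measurable]:
  "std_normal_density_vec \<in> borel_measurable borel"
  unfolding std_normal_density_vec_def by measurable

lemma std_normal_density_vec_eq:
  "std_normal_density_vec (y :: real^'n) = (1 / sqrt (2 * pi)) ^ CARD('n) * exp (- (norm y)\<^sup>2 / 2)"
proof -
  have "(norm y)\<^sup>2 = (\<Sum>i\<in>UNIV. (y$i)\<^sup>2)"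
    unfolding power2_norm_eq_inner inner_vec_def by (simp add: power2_eq_square)
  then have "exp (- (norm y)\<^sup>2 / 2) = (\<Prod>i\<in>UNIV. exp (- (y$i)\<^sup>2 / 2))"
    by (simp add: sum_divide_distrib[symmetric] exp_sum[symmetric] sum_negf)
  then show ?thesis
    unfolding std_normal_density_vec_def normal_density_def
    by (simp add: prod_dividef power_one_over)
qed

lemma std_normal_density_vec_orthogonal_transformation:
  fixes f :: "real^'n \<Rightarrow> real^'n"
  assumes "orthogonal_transformation f"
  shows "std_normal_density_vec (f y) = std_normal_density_vec y"
  unfolding std_normal_density_vec_eq using assms by (simp add: orthogonal_transformation_norm)

lemma nn_integral_eq_has_bochner_integral:
  fixes f :: "'a \<Rightarrow> real"
  assumes "has_bochner_integral M f x" "\<And>y. 0 \<le> f y"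
  shows "(\<integral>\<^sup>+y. ennreal (f y) \<partial>M) = ennreal x"
  using assms nn_integral_eq_integral[of M f]
  by (auto simp: has_bochner_integral_iff)

lemma nn_integral_std_normal_density: "(\<integral>\<^sup>+x. ennreal (std_normal_density x) \<partial>lborel) = 1"
  using std_normal_moment_even[of 0] nn_integral_eq_has_bochner_integral[of lborel std_normal_density 1]
  by simp

lemma nn_integral_std_normal_density_abs:
  "(\<integral>\<^sup>+x. ennreal (std_normal_density x * \<bar>x\<bar>) \<partial>lborel) = ennreal (sqrt (2 / pi))"
  using std_normal_moment_abs_odd[of 0] by (intro nn_integral_eq_has_bochner_integral) auto

lemma nn_integral_std_normal_density_vec_abs_component:
  fixes k :: "'n::finite"
  shows "(\<integral>\<^sup>+y. ennreal (std_normal_density_vec y * \<bar>y$k\<bar>) \<partial>lborel) = ennreal (sqrt (2 / pi))"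
proof -
  define h where "h i x = std_normal_density x * (if i = k then \<bar>x\<bar> else 1)" for i x
  have "std_normal_density_vec y * \<bar>y$k\<bar> = (\<Prod>i\<in>UNIV. h i (y$i))" for y :: "real^'n"
    unfolding std_normal_density_vec_def h_def prod.distrib by simp
  then have "(\<integral>\<^sup>+y. ennreal (std_normal_density_vec y * \<bar>y$k\<bar>) \<partial>lborel) =
      (\<integral>\<^sup>+y. ennreal (\<Prod>i\<in>UNIV. h i (y$i)) \<partial>lborel)"
    by simp
  also have "\<dots> = (\<Prod>i\<in>UNIV. \<integral>\<^sup>+x. ennreal (h i x) \<partial>lborel)"
    by (rule nn_integral_lborel_prod_vec) (simp_all add: h_def)
  also have "\<dots> = (\<Prod>i\<in>UNIV. if i = k then ennreal (sqrt (2 / pi)) else 1)"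
    by (intro prod.cong) (simp_all add: h_def nn_integral_std_normal_density_abs nn_integral_std_normal_density)
  finally show ?thesis by simp
qed

text \<open>Rotate \<open>w\<close> onto a coordinate axis; the density is rotation invariant.\<close>
lemma nn_integral_std_normal_density_vec_abs_inner:
  fixes w :: "real^'n::{finite,wellorder}"
  shows "(\<integral>\<^sup>+y. ennreal (std_normal_density_vec y * \<bar>w \<bullet> y\<bar>) \<partial>lborel) = ennreal (sqrt (2 / pi) * norm w)"
proof -
  obtain k :: 'n where True by blast
  obtain f :: "(real, 'n) vec \<Rightarrow> (real, 'n) vec"
    where f: "orthogonal_transformation f" and fw: "f (norm w *\<^sub>R axis k 1) = w"
    using orthogonal_transformation_exists[of "norm w *\<^sub>R axis k 1" w] by auto
  have "(\<integral>\<^sup>+y. ennreal (std_normal_density_vec y * \<bar>w \<bullet> y\<bar>) \<partial>lborel) =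
      (\<integral>\<^sup>+y. ennreal (std_normal_density_vec (f y) * \<bar>w \<bullet> f y\<bar>) \<partial>lborel)"
    by (rule nn_integral_lborel_orthogonal_transformation[OF f]) measurable
  also have "\<dots> = (\<integral>\<^sup>+y. ennreal (norm w) * ennreal (std_normal_density_vec y * \<bar>y$k\<bar>) \<partial>lborel)"
  proof (rule nn_integral_cong)
    fix y
    have "w \<bullet> f y = (norm w *\<^sub>R axis k 1) \<bullet> y"
      using f fw unfolding orthogonal_transformation_def by metis
    then have "w \<bullet> f y = norm w * y$k" by (simp add: inner_axis')
    then show "ennreal (std_normal_density_vec (f y) * \<bar>w \<bullet> f y\<bar>) =
        ennreal (norm w) * ennreal (std_normal_density_vec y * \<bar>y$k\<bar>)"
      by (simp add: std_normal_density_vec_orthogonal_transformation[OF f] abs_mult mult_ac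
          std_normal_density_vec_nonneg flip: ennreal_mult)
  qed
  also have "\<dots> = ennreal (sqrt (2 / pi) * norm w)"
    by (simp add: nn_integral_cmult nn_integral_std_normal_density_vec_abs_component mult.commute
        flip: ennreal_mult)
  finally show ?thesis .
qed

lemma std_normal_density_mult_exp_eq:
  fixes s x :: real
  defines "\<sigma> \<equiv> 1 / sqrt (1 + s\<^sup>2)"
  shows "std_normal_density x * exp (- (s * x)\<^sup>2 / 2) = \<sigma> * normal_density 0 \<sigma> x"
proof -
  have pos: "1 + s\<^sup>2 > 0" by (simp add: add_pos_nonneg)
  have "\<sigma> * (1 / sqrt (2 * pi * \<sigma>\<^sup>2)) = 1 / sqrt (2 * pi)"
    unfolding \<sigma>_def using pos by (simp add: real_sqrt_mult real_sqrt_divide field_simps)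
  moreover have "exp (- x\<^sup>2 / (2 * \<sigma>\<^sup>2)) = exp (- x\<^sup>2 / 2) * exp (- (s * x)\<^sup>2 / 2)"
    unfolding \<sigma>_def exp_add[symmetric] using pos by (simp add: field_simps)
  ultimately show ?thesis unfolding normal_density_def by (simp add: field_simps)
qed

lemma nn_integral_std_normal_density_mult_exp:
  "(\<integral>\<^sup>+x. ennreal (std_normal_density x * exp (- (s * x)\<^sup>2 / 2)) \<partial>lborel) =
    ennreal (1 / sqrt (1 + s\<^sup>2))"
proof -
  define \<sigma> where "\<sigma> = 1 / sqrt (1 + s\<^sup>2)"
  have "\<sigma> > 0" unfolding \<sigma>_def by (simp add: add_pos_nonneg)
  then have "has_bochner_integral lborel (\<lambda>x. normal_density 0 \<sigma> x * (x - 0) ^ (2 * 0))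
      (fact (2 * 0) / ((2 / \<sigma>\<^sup>2) ^ 0 * fact 0))"
    by (rule normal_moment_even)
  then have "has_bochner_integral lborel (\<lambda>x. \<sigma> * normal_density 0 \<sigma> x) (\<sigma> * 1)"
    by (intro has_bochner_integral_mult_right) simp
  then have "has_bochner_integral lborel (\<lambda>x. \<sigma> * normal_density 0 \<sigma> x) \<sigma>"
    by simp
  then show ?thesis
    unfolding \<sigma>_def std_normal_density_mult_exp_eq[symmetric]
    by (rule nn_integral_eq_has_bochner_integral) simp
qed

lemma nn_integral_std_normal_density_mult_exp_sq:
  "(\<integral>\<^sup>+x. ennreal (std_normal_density x * exp (- (s * x)\<^sup>2 / 2) * x\<^sup>2) \<partial>lborel) =
    ennreal ((1 / sqrt (1 + s\<^sup>2)) ^ 3)"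
proof -
  define \<sigma> where "\<sigma> = 1 / sqrt (1 + s\<^sup>2)"
  have "\<sigma> > 0" unfolding \<sigma>_def by (simp add: add_pos_nonneg)
  then have "has_bochner_integral lborel (\<lambda>x. normal_density 0 \<sigma> x * (x - 0) ^ (2 * 1))
      (fact (2 * 1) / ((2 / \<sigma>\<^sup>2) ^ 1 * fact 1))"
    by (rule normal_moment_even)
  then have "has_bochner_integral lborel (\<lambda>x. \<sigma> * (normal_density 0 \<sigma> x * x\<^sup>2)) (\<sigma> * \<sigma>\<^sup>2)"
    by (intro has_bochner_integral_mult_right) (use \<open>\<sigma> > 0\<close> in simp)
  then have "has_bochner_integral lborel (\<lambda>x. \<sigma> * normal_density 0 \<sigma> x * x\<^sup>2) (\<sigma> ^ 3)"
    by (simp add: mult.assoc power3_eq_cube power2_eq_square)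
  then show ?thesis
    unfolding \<sigma>_def std_normal_density_mult_exp_eq[symmetric]
    by (rule nn_integral_eq_has_bochner_integral) simp
qed

lemma inverse_eq_nn_integral_half_gaussian:
  fixes a :: real
  assumes a: "a > 0"
  shows "ennreal (1 / a) =
    ennreal (sqrt (2 / pi)) * (\<integral>\<^sup>+s. ennreal (indicator {0..} s * exp (- (s * a)\<^sup>2 / 2)) \<partial>lborel)"
proof -
  define c where "c = a / sqrt 2"
  define I where "I = (\<integral>\<^sup>+s. ennreal (indicator {0..} s * exp (- (s * a)\<^sup>2 / 2)) \<partial>lborel)"
  have c: "c > 0" using a by (simp add: c_def)
  have "ennreal (sqrt pi / 2) = (\<integral>\<^sup>+x. ennreal (indicator {0..} x * exp (- x\<^sup>2)) \<partial>lborel)"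
    using gaussian_moment_0 by (intro nn_integral_eq_has_bochner_integral[symmetric]) auto
  also have "\<dots> = ennreal c * (\<integral>\<^sup>+x. ennreal (indicator {0..} (c * x) * exp (- (c * x)\<^sup>2)) \<partial>lborel)"
    using nn_integral_real_affine[of "\<lambda>x. ennreal (indicator {0..} x * exp (- x\<^sup>2))" c 0] c by simp
  also have "(\<lambda>x. indicator {0..} (c * x) * exp (- (c * x)\<^sup>2)) = (\<lambda>x. indicator {0..} x * exp (- (x * a)\<^sup>2 / 2))"
  proof
    fix x
    have "indicator {0..} (c * x) = (indicator {0..} x :: real)"
      using c by (auto simp: indicator_def zero_le_mult_iff)
    moreover have "(c * x)\<^sup>2 = (x * a)\<^sup>2 / 2" by (simp add: c_def power_mult_distrib power_divide)
    ultimately show "indicator {0..} (c * x) * exp (- (c * x)\<^sup>2) = indicator {0..} x * exp (- (x * a)\<^sup>2 / 2)"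
      by simp
  qed
  finally have "ennreal c * I = ennreal (sqrt pi / 2)" unfolding I_def ..
  moreover have "ennreal (1 / c) * (ennreal c * I) = I"
    using c by (simp add: mult.assoc[symmetric] flip: ennreal_mult)
  ultimately have "I = ennreal (1 / c) * ennreal (sqrt pi / 2)" by simp
  also have "\<dots> = ennreal (sqrt (pi / 2) / a)"
    using c by (subst ennreal_mult[symmetric]) (auto simp: c_def real_sqrt_divide field_simps)
  finally have "ennreal (sqrt (2 / pi)) * I = ennreal (sqrt (2 / pi)) * ennreal (sqrt (pi / 2) / a)"
    by simp
  also have "\<dots> = ennreal (1 / a)"
    using a by (subst ennreal_mult[symmetric]) (auto simp: real_sqrt_mult[symmetric])
  finally show ?thesis unfolding I_def ..
qed

lemma std_normal_density_vec_mult_exp_eq_prod: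
  fixes y :: "real^'n"
  shows "std_normal_density_vec y * (y$j)\<^sup>2 * exp (- (s * norm y)\<^sup>2 / 2) =
    (\<Prod>i\<in>UNIV. std_normal_density (y$i) * exp (- (s * y$i)\<^sup>2 / 2) * (if i = j then (y$i)\<^sup>2 else 1))"
proof -
  have "(s * norm y)\<^sup>2 = (\<Sum>i\<in>UNIV. (s * y$i)\<^sup>2)"
    unfolding power_mult_distrib power2_norm_eq_inner inner_vec_def
    by (simp add: sum_distrib_left power2_eq_square)
  then have "exp (- (s * norm y)\<^sup>2 / 2) = (\<Prod>i\<in>UNIV. exp (- (s * y$i)\<^sup>2 / 2))"
    by (simp add: sum_divide_distrib[symmetric] exp_sum[symmetric] sum_negf)
  then show ?thesis
    unfolding std_normal_density_vec_def prod.distrib by (simp add: mult_ac)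
qed

lemma nn_integral_std_normal_density_vec_sq_mult_exp:
  fixes j :: "'n::finite"
  shows "(\<integral>\<^sup>+y. ennreal (std_normal_density_vec y * (y$j)\<^sup>2 * exp (- (s * norm y)\<^sup>2 / 2)) \<partial>lborel) =
    ennreal ((1 / sqrt (1 + s\<^sup>2)) ^ (CARD('n) + 2))"
proof -
  define h where "h i x = std_normal_density x * exp (- (s * x)\<^sup>2 / 2) * (if i = j then x\<^sup>2 else 1)"
    for i x
  define \<sigma> where "\<sigma> = 1 / sqrt (1 + s\<^sup>2)"
  have "\<sigma> \<ge> 0" by (simp add: \<sigma>_def)
  have "(\<integral>\<^sup>+y. ennreal (std_normal_density_vec y * (y$j)\<^sup>2 * exp (- (s * norm y)\<^sup>2 / 2)) \<partial>lborel) =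
      (\<integral>\<^sup>+y. ennreal (\<Prod>i\<in>UNIV. h i (y$i)) \<partial>lborel)"
    unfolding std_normal_density_vec_mult_exp_eq_prod h_def ..
  also have "\<dots> = (\<Prod>i\<in>UNIV. \<integral>\<^sup>+x. ennreal (h i x) \<partial>lborel)"
    by (rule nn_integral_lborel_prod_vec) (simp_all add: h_def)
  also have "\<dots> = (\<Prod>i\<in>UNIV. ennreal (\<sigma> * (if i = j then \<sigma>\<^sup>2 else 1)))"
  proof (rule prod.cong)
    fix i
    show "(\<integral>\<^sup>+x. ennreal (h i x) \<partial>lborel) = ennreal (\<sigma> * (if i = j then \<sigma>\<^sup>2 else 1))"
      using nn_integral_std_normal_density_mult_exp[of s] nn_integral_std_normal_density_mult_exp_sq[of s]
      by (simp add: h_def \<sigma>_def power3_eq_cube power2_eq_square)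
  qed simp
  also have "\<dots> = ennreal (\<sigma> ^ (CARD('n) + 2))"
    using \<open>\<sigma> \<ge> 0\<close> by (simp add: prod_ennreal prod.distrib power_add power2_eq_square)
  finally show ?thesis unfolding \<sigma>_def .
qed

text \<open>Represent \<open>1 / norm y\<close> as a Gaussian integral in an auxiliary variable \<open>s\<close>
  and integrate over \<open>y\<close> first.\<close>
lemma nn_integral_std_normal_density_vec_sq_div_norm:
  fixes j :: "'n::finite"
  shows "(\<integral>\<^sup>+y. ennreal (std_normal_density_vec y * (y$j)\<^sup>2 / norm y) \<partial>lborel) =
    ennreal (sqrt (2 / pi)) *
      (\<integral>\<^sup>+s. ennreal ((1 / sqrt (1 + s\<^sup>2)) ^ (CARD('n) + 2)) * indicator {0..} s \<partial>lborel)"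
proof -
  define g where "g y = std_normal_density_vec y * (y$j)\<^sup>2" for y :: "real^'n"
  define H where "H y s = ennreal (sqrt (2 / pi) * indicator {0..} s) *
      ennreal (g y * exp (- (s * norm y)\<^sup>2 / 2))" for y s
  have g: "0 \<le> g y" for y by (simp add: g_def std_normal_density_vec_nonneg)
  have "ennreal (g y / norm y) = (\<integral>\<^sup>+s. H y s \<partial>lborel)" for y
  proof (cases "y = 0")
    case False
    have "(\<integral>\<^sup>+s. H y s \<partial>lborel) =
        (\<integral>\<^sup>+s. ennreal (g y) * (ennreal (sqrt (2 / pi)) * ennreal (indicator {0..} s * exp (- (s * norm y)\<^sup>2 / 2))) \<partial>lborel)"
      unfolding H_def by (intro nn_integral_cong) (simp add: g mult_ac flip: ennreal_mult)
    also have "\<dots> = ennreal (g y) * ennreal (1 / norm y)"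
      using False by (simp add: nn_integral_cmult inverse_eq_nn_integral_half_gaussian)
    finally show ?thesis using g by (simp flip: ennreal_mult)
  qed (simp add: H_def g_def)
  then have "(\<integral>\<^sup>+y. ennreal (g y / norm y) \<partial>lborel) = (\<integral>\<^sup>+y. (\<integral>\<^sup>+s. H y s \<partial>lborel) \<partial>lborel)"
    by simp
  also have "\<dots> = (\<integral>\<^sup>+s. (\<integral>\<^sup>+y. H y s \<partial>lborel) \<partial>lborel)"
    by (rule lborel_pair.Fubini') (unfold H_def g_def, measurable)
  also have "\<dots> = (\<integral>\<^sup>+s. ennreal (sqrt (2 / pi)) *
      (ennreal ((1 / sqrt (1 + s\<^sup>2)) ^ (CARD('n) + 2)) * indicator {0..} s) \<partial>lborel)"
  proof (rule nn_integral_cong)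
    fix s :: real
    have "(\<integral>\<^sup>+y. H y s \<partial>lborel) = ennreal (sqrt (2 / pi) * indicator {0..} s) *
        (\<integral>\<^sup>+y. ennreal (g y * exp (- (s * norm y)\<^sup>2 / 2)) \<partial>lborel)"
      unfolding H_def by (rule nn_integral_cmult) (unfold g_def, measurable)
    then show "(\<integral>\<^sup>+y. H y s \<partial>lborel) = ennreal (sqrt (2 / pi)) *
        (ennreal ((1 / sqrt (1 + s\<^sup>2)) ^ (CARD('n) + 2)) * indicator {0..} s)"
      unfolding g_def nn_integral_std_normal_density_vec_sq_mult_exp
      by (simp add: ennreal_mult ennreal_indicator mult_ac)
  qed
  finally show ?thesis by (simp add: g_def nn_integral_cmult)
qed

lemma DERIV_antiderivative_inverse_sqrt_pow5:
  "DERIV (\<lambda>y::real. y * (2 * y\<^sup>2 + 3) / (3 * sqrt (1 + y\<^sup>2) ^ 3)) x :> (1 / sqrt (1 + x\<^sup>2)) ^ 5"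
proof -
  define w where "w = sqrt (1 + x\<^sup>2)"
  have w: "w > 0" "w\<^sup>2 = 1 + x\<^sup>2" unfolding w_def by (simp_all add: add_pos_nonneg)
  have deriv: "DERIV (\<lambda>y::real. y * (2 * y\<^sup>2 + 3) / (3 * sqrt (1 + y\<^sup>2) ^ 3)) x :>
     ((6 * x\<^sup>2 + 3) * (3 * w ^ 3) - x * (2 * x\<^sup>2 + 3) * (9 * w\<^sup>2 * (x / w))) / (3 * w ^ 3)\<^sup>2"
    unfolding w_def using w
    by (auto intro!: derivative_eq_intros simp: power2_eq_square field_simps) (smt (verit) zero_le_square)
  have "(6 * x\<^sup>2 + 3) * (3 * w ^ 3) - x * (2 * x\<^sup>2 + 3) * (9 * w\<^sup>2 * (x / w))
      = 9 * w * ((2 * x\<^sup>2 + 1) * w\<^sup>2 - x\<^sup>2 * (2 * x\<^sup>2 + 3))"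
    using w(1) by (simp add: field_simps power2_eq_square power3_eq_cube)
  also have "(2 * x\<^sup>2 + 1) * w\<^sup>2 - x\<^sup>2 * (2 * x\<^sup>2 + 3) = 1"
    unfolding w(2) by (simp add: algebra_simps power2_eq_square)
  finally have "((6 * x\<^sup>2 + 3) * (3 * w ^ 3) - x * (2 * x\<^sup>2 + 3) * (9 * w\<^sup>2 * (x / w))) / (3 * w ^ 3)\<^sup>2
      = 1 / w ^ 5"
    using w(1) by (simp add: field_simps eval_nat_numeral)
  with deriv show ?thesis unfolding w_def by (simp add: power_one_over)
qed

lemma nn_integral_inverse_sqrt_pow5:
  "(\<integral>\<^sup>+s. ennreal ((1 / sqrt (1 + s\<^sup>2)) ^ 5) * indicator {0..} s \<partial>lborel) = ennreal (2 / 3)"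
proof -
  define F :: "real \<Rightarrow> real" where "F = (\<lambda>y. y * (2 * y\<^sup>2 + 3) / (3 * sqrt (1 + y\<^sup>2) ^ 3))"
  have "(F \<longlongrightarrow> 2 / 3) at_top" unfolding F_def by real_asymp
  moreover have "(\<lambda>s::real. (1 / sqrt (1 + s\<^sup>2)) ^ 5) \<in> borel_measurable borel" by measurable
  ultimately have "(\<integral>\<^sup>+s. ennreal ((1 / sqrt (1 + s\<^sup>2)) ^ 5) * indicator {0..} s \<partial>lborel) = 2 / 3 - F 0"
    using DERIV_antiderivative_inverse_sqrt_pow5 by (intro nn_integral_FTC_atLeast) (simp_all add: F_def)
  then show ?thesis by (simp add: F_def)
qed

lemma nn_integral_std_normal_density_vec3_sq_div_norm:
  fixes j :: 3
  shows "(\<integral>\<^sup>+y. ennreal (std_normal_density_vec y * (y$j)\<^sup>2 / norm y) \<partial>lborel) =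
    ennreal (2 / 3 * sqrt (2 / pi))"
proof -
  have "(\<integral>\<^sup>+y. ennreal (std_normal_density_vec y * (y$j)\<^sup>2 / norm y) \<partial>lborel) =
      ennreal (sqrt (2 / pi)) * ennreal (2 / 3)"
    using nn_integral_std_normal_density_vec_sq_div_norm[of j] nn_integral_inverse_sqrt_pow5 by simp
  also have "\<dots> = ennreal (2 / 3 * sqrt (2 / pi))"
    by (subst ennreal_mult[symmetric]) (auto simp: mult.commute)
  finally show ?thesis .
qed

lemma nn_integral_std_normal_density_vec3_weighted_sq_div_norm:
  fixes c :: "real^3"
  assumes "\<And>j. 0 \<le> c$j"
  shows "(\<integral>\<^sup>+y. ennreal (std_normal_density_vec y * (\<Sum>j\<in>UNIV. c$j * ((y$j)\<^sup>2 / norm y))) \<partial>lborel) =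
    ennreal ((\<Sum>j\<in>UNIV. c$j) * (2 / 3 * sqrt (2 / pi)))"
proof -
  have "(\<integral>\<^sup>+y. ennreal (std_normal_density_vec y * (\<Sum>j\<in>UNIV. c$j * ((y$j)\<^sup>2 / norm y))) \<partial>lborel) =
      (\<integral>\<^sup>+y. (\<Sum>j\<in>UNIV. ennreal (c$j) * ennreal (std_normal_density_vec y * (y$j)\<^sup>2 / norm y)) \<partial>lborel)"
  proof (rule nn_integral_cong)
    fix y :: "real^3"
    have "std_normal_density_vec y * (\<Sum>j\<in>UNIV. c$j * ((y$j)\<^sup>2 / norm y)) =
        (\<Sum>j\<in>UNIV. c$j * (std_normal_density_vec y * (y$j)\<^sup>2 / norm y))"
      by (simp add: sum_distrib_left mult_ac)
    also have "ennreal \<dots> = (\<Sum>j\<in>UNIV. ennreal (c$j * (std_normal_density_vec y * (y$j)\<^sup>2 / norm y)))"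
      using assms by (intro sum_ennreal[symmetric]) (simp add: std_normal_density_vec_nonneg)
    also have "\<dots> = (\<Sum>j\<in>UNIV. ennreal (c$j) * ennreal (std_normal_density_vec y * (y$j)\<^sup>2 / norm y))"
      using assms by (intro sum.cong refl ennreal_mult) (simp_all add: std_normal_density_vec_nonneg)
    finally show "ennreal (std_normal_density_vec y * (\<Sum>j\<in>UNIV. c$j * ((y$j)\<^sup>2 / norm y))) =
        (\<Sum>j\<in>UNIV. ennreal (c$j) * ennreal (std_normal_density_vec y * (y$j)\<^sup>2 / norm y))" .
  qed
  also have "\<dots> = (\<Sum>j\<in>UNIV. ennreal (c$j) * ennreal (2 / 3 * sqrt (2 / pi)))"
    by (simp add: nn_integral_sum nn_integral_cmult nn_integral_std_normal_density_vec3_sq_div_norm)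
  also have "\<dots> = ennreal ((\<Sum>j\<in>UNIV. c$j) * (2 / 3 * sqrt (2 / pi)))"
  proof -
    have "(\<Sum>j\<in>UNIV. ennreal (c$j) * ennreal (2 / 3 * sqrt (2 / pi))) =
        (\<Sum>j\<in>UNIV. ennreal (c$j * (2 / 3 * sqrt (2 / pi))))"
      using assms by (intro sum.cong refl ennreal_mult[symmetric]) simp_all
    also have "\<dots> = ennreal (\<Sum>j\<in>UNIV. c$j * (2 / 3 * sqrt (2 / pi)))"
      using assms by (intro sum_ennreal) simp
    finally show ?thesis by (simp only: sum_distrib_right)
  qed
  finally show ?thesis .
qed

lemma nn_integral_std_normal_density_vec_expectation_abs_inner_le:
  fixes w :: "'l \<Rightarrow> real^'n::{finite,wellorder}"
  assumes w: "\<And>l. norm (w l) \<le> 1"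
  shows "(\<integral>\<^sup>+y. ennreal (std_normal_density_vec y * measure_pmf.expectation P (\<lambda>l. \<bar>w l \<bullet> y\<bar>)) \<partial>lborel)
    \<le> ennreal (sqrt (2 / pi))"
proof -
  have "ennreal (std_normal_density_vec y * measure_pmf.expectation P (\<lambda>l. \<bar>w l \<bullet> y\<bar>)) =
      (\<integral>\<^sup>+l. ennreal (std_normal_density_vec y * \<bar>w l \<bullet> y\<bar>) \<partial>measure_pmf P)" for y
  proof -
    have "\<bar>w l \<bullet> y\<bar> \<le> norm y" for l
      using Cauchy_Schwarz_ineq2[of "w l" y] mult_right_mono[OF w[of l], of "norm y"] by simp
    then have "\<bar>std_normal_density_vec y * \<bar>w l \<bullet> y\<bar>\<bar> \<le> std_normal_density_vec y * norm y" for l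
      by (simp add: abs_mult std_normal_density_vec_nonneg mult_left_mono)
    then have "integrable (measure_pmf P) (\<lambda>l. std_normal_density_vec y * \<bar>w l \<bullet> y\<bar>)"
      by (rule integrable_measure_pmf_bounded)
    then show ?thesis
      by (simp add: nn_integral_eq_integral std_normal_density_vec_nonneg)
  qed
  then have "(\<integral>\<^sup>+y. ennreal (std_normal_density_vec y * measure_pmf.expectation P (\<lambda>l. \<bar>w l \<bullet> y\<bar>)) \<partial>lborel)
      = (\<integral>\<^sup>+y. (\<integral>\<^sup>+l. ennreal (std_normal_density_vec y * \<bar>w l \<bullet> y\<bar>) \<partial>measure_pmf P) \<partial>lborel)"
    by simp
  also have "\<dots> = (\<integral>\<^sup>+l. (\<integral>\<^sup>+y. ennreal (std_normal_density_vec y * \<bar>w l \<bullet> y\<bar>) \<partial>lborel) \<partial>measure_pmf P)"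
  proof -
    have "pair_sigma_finite lborel (measure_pmf P)"
      by (simp add: pair_sigma_finite_def sigma_finite_lborel measure_pmf.sigma_finite_measure_axioms)
    moreover have [measurable]: "(\<lambda>l. w l $ i) \<in> borel_measurable (measure_pmf P)" for i by simp
    have "(\<lambda>(y, l). ennreal (std_normal_density_vec y * \<bar>w l \<bullet> y\<bar>)) \<in> borel_measurable (lborel \<Otimes>\<^sub>M measure_pmf P)"
      unfolding inner_vec_def by measurable
    ultimately show ?thesis by (rule pair_sigma_finite.Fubini'[symmetric])
  qed
  also have "\<dots> = (\<integral>\<^sup>+l. ennreal (sqrt (2 / pi) * norm (w l)) \<partial>measure_pmf P)"
    by (simp add: nn_integral_std_normal_density_vec_abs_inner)
  also have "\<dots> \<le> (\<integral>\<^sup>+l. ennreal (sqrt (2 / pi)) \<partial>measure_pmf P)"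
    using w by (intro nn_integral_mono ennreal_leI) (auto intro: mult_left_le)
  also have "\<dots> = ennreal (sqrt (2 / pi))" by (simp add: measure_pmf.emeasure_space_1)
  finally show ?thesis .
qed

section \<open>The steering bound\<close>

definition sgn_flip :: "real^'n \<Rightarrow> real^'n \<Rightarrow> real^'n" where
  "sgn_flip t x = (\<chi> j. (if 0 \<le> t$j then 1 else -1) * x$j)"

lemma norm_sgn_flip [simp]: "norm (sgn_flip t x) = norm x"
proof -
  have "(norm (sgn_flip t x))\<^sup>2 = (norm x)\<^sup>2"
    unfolding power2_norm_eq_inner inner_vec_def sgn_flip_def by (intro sum.cong) auto
  then show ?thesis by (simp add: power2_eq_iff_nonneg)
qed

lemma inner_sgn_flip_left: "sgn_flip t a \<bullet> b = a \<bullet> sgn_flip t b"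
  unfolding inner_vec_def sgn_flip_def by (simp add: mult_ac)

lemma sum_mult_sgn_flip: "(\<Sum>j\<in>UNIV. t$j * u$j * sgn_flip t u $ j) = (\<Sum>j\<in>UNIV. \<bar>t$j\<bar> * (u$j)\<^sup>2)"
  unfolding sgn_flip_def by (intro sum.cong) (auto simp: power2_eq_square)

lemma LHS_correlation_model_pointwise_bound:
  assumes "LHS_correlation_model P A r t"
  shows "(\<Sum>j\<in>UNIV. \<bar>t$j\<bar> * ((y$j)\<^sup>2 / norm y)) \<le> measure_pmf.expectation P (\<lambda>l. \<bar>sgn_flip t (r l) \<bullet> y\<bar>)"
proof (cases "y = 0")
  case False
  have A: "\<And>l u. norm u = 1 \<Longrightarrow> \<bar>A l u\<bar> \<le> 1" and r: "\<And>l. norm (r l) \<le> 1"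
    and corr: "\<And>u v. norm u = 1 \<Longrightarrow> norm v = 1 \<Longrightarrow>
      (\<Sum>j\<in>UNIV. t$j * u$j * v$j) = measure_pmf.expectation P (\<lambda>l. A l u * (r l \<bullet> v))"
    using assms unfolding LHS_correlation_model_def by blast+
  define n where "n = norm y"
  define u where "u = (1 / n) *\<^sub>R y"
  have n: "n > 0" using False by (simp add: n_def)
  have u: "norm u = 1" and y: "y = n *\<^sub>R u" using n by (simp_all add: u_def n_def)
  have inner_le: "\<bar>r l \<bullet> sgn_flip t u\<bar> \<le> 1" for l
    using Cauchy_Schwarz_ineq2[of "r l" "sgn_flip t u"] r[of l] u by simp
  have "(\<Sum>j\<in>UNIV. \<bar>t$j\<bar> * ((y$j)\<^sup>2 / norm y)) = n * (\<Sum>j\<in>UNIV. t$j * u$j * sgn_flip t u $ j)"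
    unfolding sum_mult_sgn_flip n_def[symmetric] y using n u
    by (simp add: sum_distrib_left power2_eq_square field_simps)
  also have "\<dots> = n * measure_pmf.expectation P (\<lambda>l. A l u * (r l \<bullet> sgn_flip t u))"
    using corr u by simp
  also have "\<dots> \<le> n * measure_pmf.expectation P (\<lambda>l. \<bar>sgn_flip t (r l) \<bullet> u\<bar>)"
  proof (intro mult_left_mono integral_mono)
    show "integrable (measure_pmf P) (\<lambda>l. A l u * (r l \<bullet> sgn_flip t u))"
      using A[OF u] inner_le
      by (intro integrable_measure_pmf_bounded[where B=1]) (simp add: abs_mult mult_le_one)
    show "integrable (measure_pmf P) (\<lambda>l. \<bar>sgn_flip t (r l) \<bullet> u\<bar>)"
      using inner_le by (intro integrable_measure_pmf_bounded[where B=1]) (simp add: inner_sgn_flip_left)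
    fix l
    have "A l u * (r l \<bullet> sgn_flip t u) \<le> \<bar>A l u\<bar> * \<bar>r l \<bullet> sgn_flip t u\<bar>"
      by (simp add: abs_mult[symmetric])
    also have "\<dots> \<le> \<bar>r l \<bullet> sgn_flip t u\<bar>"
      using A[OF u, of l] by (intro mult_left_le_one_le) auto
    finally show "A l u * (r l \<bullet> sgn_flip t u) \<le> \<bar>sgn_flip t (r l) \<bullet> u\<bar>"
      by (simp add: inner_sgn_flip_left)
  qed (use n in simp)
  also have "\<dots> = measure_pmf.expectation P (\<lambda>l. \<bar>sgn_flip t (r l) \<bullet> y\<bar>)"
    unfolding y using n by (simp add: abs_mult)
  finally show ?thesis .
qed simp

lemma LHS_correlation_model_sum_abs_le:
  assumes "LHS_correlation_model P A r t"
  shows "(\<Sum>j\<in>UNIV. \<bar>t$j\<bar>) \<le> 3 / 2"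
proof -
  define c :: "real^3" where "c = (\<chi> j. \<bar>t$j\<bar>)"
  have "norm (sgn_flip t (r l)) \<le> 1" for l
    using assms unfolding LHS_correlation_model_def by simp
  have "ennreal ((\<Sum>j\<in>UNIV. \<bar>t$j\<bar>) * (2 / 3 * sqrt (2 / pi))) =
      (\<integral>\<^sup>+y. ennreal (std_normal_density_vec y * (\<Sum>j\<in>UNIV. \<bar>t$j\<bar> * ((y$j)\<^sup>2 / norm y))) \<partial>lborel)"
    using nn_integral_std_normal_density_vec3_weighted_sq_div_norm[of c] by (simp add: c_def)
  also have "\<dots> \<le> (\<integral>\<^sup>+y. ennreal (std_normal_density_vec y *
      measure_pmf.expectation P (\<lambda>l. \<bar>sgn_flip t (r l) \<bullet> y\<bar>)) \<partial>lborel)"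
    using LHS_correlation_model_pointwise_bound[OF assms]
    by (intro nn_integral_mono ennreal_leI mult_left_mono std_normal_density_vec_nonneg)
  also have "\<dots> \<le> ennreal (sqrt (2 / pi))"
    by (rule nn_integral_std_normal_density_vec_expectation_abs_inner_le) fact
  finally have "(\<Sum>j\<in>UNIV. \<bar>t$j\<bar>) * (2 / 3 * sqrt (2 / pi)) \<le> sqrt (2 / pi)"
    by (simp add: ennreal_le_iff)
  then show ?thesis by (simp add: field_simps)
qed

theorem mainTheorem6:
  fixes t :: "real^3"
  assumes "density_op (T_state t)"
    and "(\<Sum>j\<in>UNIV. \<bar>t$j\<bar>) > 3/2"
  shows "\<not> LHS_Bob TYPE('l) (T_state t) \<and> \<not> LHS_Alice TYPE('l) (T_state t)"
proof -
  have no_Bob: "\<not> LHS_Bob TYPE('l) (T_state t)"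
  proof
    assume "LHS_Bob TYPE('l) (T_state t)"
    then obtain P :: "'l pmf" and A r where "LHS_correlation_model P A r t"
      using LHS_Bob_T_state_imp_correlation_model by blast
    then have "(\<Sum>j\<in>UNIV. \<bar>t$j\<bar>) \<le> 3 / 2" by (rule LHS_correlation_model_sum_abs_le)
    with assms(2) show False by simp
  qed
  then have "\<not> LHS_Alice TYPE('l) (T_state t)"
    using LHS_Alice_T_state_imp_LHS_Bob by blast
  with no_Bob show ?thesis ..
qed

end
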